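(* Let $T$ be a tree and $\mathcal{M}$ a $2$-matching of $T^\ell$. Then \[ d(\mathcal{M},X)=x_{\ell(\mathcal{M})}+\text{(terms of lower total degree)}, \] where $x_{\ell(\mathcal{M})}=\prod_{uu\in\ell(\mathcal{M})}x_u$.
   Context: A tree is a simple connected graph without cycles. $L(T,X)$ is the matrix indexed by $V(T)$ with diagonal entries $x_u$ and off-diagonal entry $-1$ for adjacent vertices and $0$ otherwise. A $2$-matching of a graph (loops allowed) is a set $\mathcal{M}$ of edges such that every vertex is incident to at most two edges of $\mathcal{M}$ (a loop counts twice for incidence but as one edge). $T^\ell$ is $T$ with a loop added at each vertex; $\ell(\mathcal{M})$ is the set of loops in $\mathcal{M}$. Components of $\mathcal{M}$ are single loops or paths of $T$; orient each path $w_1\cdots w_{m+1}$ (either direction), with heads $\{w_2,\dots,w_{m+1}\}$ and tails $\{w_1,\dots,w_m\}$, a loop $uu$ having head and tail $u$; $h(\mathcal{M})$, $t(\mathcal{M})$ are the unions of heads, resp. tails, over all components. $d(\mathcal{M},X)=\pm\det L(T,X)[h(\mathcal{M}),t(\mathcal{M})]$ (rows $h(\mathcal{M})$, columns $t(\mathcal{M})$), the sign chosen so that the leading coefficient is positive. *)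

theory Defs
  imports "HOL-Library.Poly_Mapping" "Jordan_Normal_Form.Determinant"
begin

(* Multivariate polynomials in variables x_u (u a vertex) with integer coefficients:
  monomials are finitely supported exponent maps 'a => nat, polynomials are
  finitely supported maps monomial => int. *)
type_synonym 'a mpoly = "('a \<Rightarrow>\<^sub>0 nat) \<Rightarrow>\<^sub>0 int"

definition var :: "'a \<Rightarrow> 'a mpoly" where
  "var u = Poly_Mapping.single (Poly_Mapping.single u 1) 1"

definition mono_deg :: "('a \<Rightarrow>\<^sub>0 nat) \<Rightarrow> nat" where
  "mono_deg m = sum (Poly_Mapping.lookup m) (Poly_Mapping.keys m)"

definition var_prod :: "'a set \<Rightarrow> 'a mpoly" where
  "var_prod S = (\<Prod>u\<in>S. var u)"

definition lower_deg :: "'a mpoly \<Rightarrow> nat \<Rightarrow> bool" where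
  "lower_deg p d \<longleftrightarrow> (\<forall>m\<in>Poly_Mapping.keys p. mono_deg m < d)"

definition simple_graph :: "'a set \<Rightarrow> 'a set set \<Rightarrow> bool" where
  "simple_graph V E \<longleftrightarrow> finite V \<and> (\<forall>e\<in>E. e \<subseteq> V \<and> card e = 2)"

definition connected_graph :: "'a set \<Rightarrow> 'a set set \<Rightarrow> bool" where
  "connected_graph V E \<longleftrightarrow> (\<forall>u\<in>V. \<forall>v\<in>V. (u, v) \<in> {(a, b). {a, b} \<in> E}\<^sup>*)"

definition acyclic_graph :: "'a set set \<Rightarrow> bool" where
  "acyclic_graph E \<longleftrightarrow> \<not> (\<exists>cs. length cs \<ge> 3 \<and> distinct cs \<and>
      (\<forall>i < length cs. {cs ! i, cs ! ((i + 1) mod length cs)} \<in> E))"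

definition is_tree :: "'a set \<Rightarrow> 'a set set \<Rightarrow> bool" where
  "is_tree V E \<longleftrightarrow> simple_graph V E \<and> connected_graph V E \<and> acyclic_graph E"

text \<open>Edges of T^l: the edges of T together with a loop {u} at every vertex u.\<close>
definition loop_edges :: "'a set \<Rightarrow> 'a set set" where
  "loop_edges V = (\<lambda>u. {u}) ` V"

definition two_matching :: "'a set \<Rightarrow> 'a set set \<Rightarrow> 'a set set \<Rightarrow> bool" where
  "two_matching V E M \<longleftrightarrow> M \<subseteq> E \<union> loop_edges V \<and>
     (\<forall>v\<in>V. card {e \<in> M \<inter> E. v \<in> e} + (if {v} \<in> M then 2 else 0) \<le> (2::nat))"

text \<open>l(M), as the set of vertices carrying a loop in M\<close>
definition loops_of :: "'a set \<Rightarrow> 'a set set \<Rightarrow> 'a set" where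
  "loops_of V M = {u \<in> V. {u} \<in> M}"

text \<open>An orientation of the path components of M: every non-loop edge of M gets exactly
  one direction, and every vertex has at most one outgoing and at most one incoming
  oriented edge (i.e. each path is oriented consistently from one end to the other).\<close>
definition path_orientation :: "'a set set \<Rightarrow> 'a set set \<Rightarrow> ('a \<times> 'a) set \<Rightarrow> bool" where
  "path_orientation E M D \<longleftrightarrow>
     (\<forall>(a, b)\<in>D. {a, b} \<in> M \<inter> E) \<and>
     (\<forall>a b. {a, b} \<in> M \<inter> E \<longrightarrow> ((a, b) \<in> D \<longleftrightarrow> (b, a) \<notin> D)) \<and>
     (\<forall>a b c. (a, b) \<in> D \<and> (a, c) \<in> D \<longrightarrow> b = c) \<and>
     (\<forall>a b c. (b, a) \<in> D \<and> (c, a) \<in> D \<longrightarrow> b = c)"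

definition heads :: "'a set \<Rightarrow> 'a set set \<Rightarrow> ('a \<times> 'a) set \<Rightarrow> 'a set" where
  "heads V M D = snd ` D \<union> loops_of V M"

definition tails :: "'a set \<Rightarrow> 'a set set \<Rightarrow> ('a \<times> 'a) set \<Rightarrow> 'a set" where
  "tails V M D = fst ` D \<union> loops_of V M"

definition Lmat :: "'a set set \<Rightarrow> 'a \<Rightarrow> 'a \<Rightarrow> 'a mpoly" where
  "Lmat E u v = (if u = v then var u else if {u, v} \<in> E then -1 else 0)"

text \<open>det L(T,X)[R,C], rows and columns listed in increasing order (the sign is
  irrelevant, since the statement is up to sign).\<close>
definition sub_det :: "'a::linorder set set \<Rightarrow> 'a set \<Rightarrow> 'a set \<Rightarrow> 'a mpoly" where
  "sub_det E R C = det (mat (card R) (card C)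
      (\<lambda>(i, j). Lmat E (sorted_list_of_set R ! i) (sorted_list_of_set C ! j)))"

end

theory Submission
  imports Defs "HOL-Library.Transitive_Closure_Table"
begin

text \<open>Expand the minor as a sum over bijections \<open>\<sigma>\<close> from the heads onto the tails. A term
  survives only if \<open>\<sigma>\<close> fixes each head or moves it to a neighbour, and it is then
  \<open>\<plusminus>\<close> the product of \<open>x\<^sub>v\<close> over the fixed points. One such bijection sends every head
  to its predecessor on its path and fixes the loop vertices. Every edge \<open>ab\<close> of a tree is a
  cut; counting heads and tails on the side of \<open>b\<close> shows that any surviving \<open>\<sigma>\<close> must map
  \<open>b\<close> to \<open>a\<close> for every arc \<open>(a, b)\<close>. So the fixed points of a surviving bijection lie in
  \<open>\<ell>(M)\<close>, with equality only for the predecessor map, which therefore contributes the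
  unique term \<open>\<plusminus>x\<^bsub>\<ell>(M)\<^esub>\<close> of top degree.\<close>

lemma lower_deg_0 [simp]: "lower_deg 0 d"
  by (simp add: lower_deg_def)

lemma lower_deg_add: "lower_deg p d \<Longrightarrow> lower_deg q d \<Longrightarrow> lower_deg (p + q) d"
  unfolding lower_deg_def using Poly_Mapping.keys_add[of p q] by blast

lemma lower_deg_uminus [simp]: "lower_deg (- p) d \<longleftrightarrow> lower_deg p d"
  by (simp add: lower_deg_def)

lemma lower_deg_sum: "(\<And>x. x \<in> A \<Longrightarrow> lower_deg (f x) d) \<Longrightarrow> lower_deg (sum f A) d"
  by (induction A rule: infinite_finite_induct) (simp_all add: lower_deg_add)

definition set_monomial :: "'a set \<Rightarrow> ('a \<Rightarrow>\<^sub>0 nat)" where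
  "set_monomial F = (\<Sum>u\<in>F. Poly_Mapping.single u 1)"

lemma lookup_set_monomial:
  "finite F \<Longrightarrow> Poly_Mapping.lookup (set_monomial F) v = (if v \<in> F then 1 else 0)"
  unfolding set_monomial_def
  by (induction F rule: finite_induct) (auto simp: Poly_Mapping.lookup_add Poly_Mapping.lookup_single when_def)

lemma keys_set_monomial: "finite F \<Longrightarrow> Poly_Mapping.keys (set_monomial F) = F"
  by (auto simp: Poly_Mapping.in_keys_iff lookup_set_monomial split: if_splits)

lemma mono_deg_set_monomial: "finite F \<Longrightarrow> mono_deg (set_monomial F) = card F"
  by (simp add: mono_deg_def keys_set_monomial lookup_set_monomial)

lemma var_prod_eq_single: "finite F \<Longrightarrow> var_prod F = Poly_Mapping.single (set_monomial F) 1"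
proof (induction F rule: finite_induct)
  case empty
  show ?case
    by (simp add: var_prod_def set_monomial_def Poly_Mapping.one_poly_mapping.abs_eq)
next
  case (insert x F)
  then show ?case
    by (simp add: var_prod_def set_monomial_def var_def Poly_Mapping.mult_single)
qed

lemma lower_deg_var_prod: "finite F \<Longrightarrow> card F < d \<Longrightarrow> lower_deg (var_prod F) d"
  by (simp add: lower_deg_def var_prod_eq_single mono_deg_set_monomial)

lemma sum_leading_term:
  fixes f :: "'b \<Rightarrow> 'a mpoly"
  assumes "finite P" "p0 \<in> P" "f p0 = q \<or> f p0 = - q"
    and "\<And>p. p \<in> P - {p0} \<Longrightarrow> lower_deg (f p) d"
  shows "\<exists>r. lower_deg r d \<and> (sum f P = q + r \<or> sum f P = - (q + r))"
proof -
  define r where "r = sum f (P - {p0})"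
  have r: "lower_deg r d"
    unfolding r_def by (rule lower_deg_sum) (rule assms(4))
  have "sum f P = f p0 + r"
    unfolding r_def using sum.remove[OF assms(1,2)] .
  then have "sum f P = q + r \<or> sum f P = - (q + - r)"
    using assms(3) by auto
  then show ?thesis
    using r by (metis lower_deg_uminus)
qed

lemma rtrancl_path_nth:
  "rtrancl_path r x xs y \<Longrightarrow> i < length xs \<Longrightarrow> r ((x # xs) ! i) (xs ! i)"
  by (induction arbitrary: i rule: rtrancl_path.induct) (auto simp: nth_Cons split: nat.split)

lemma rtrancl_path_last: "rtrancl_path r x xs y \<Longrightarrow> last (x # xs) = y"
  by (induction rule: rtrancl_path.induct) auto

lemma tree_edge_not_bypassed:
  assumes tree: "is_tree V E" and ab: "{a, b} \<in> E"
  shows "\<not> (\<lambda>x y. {x, y} \<in> E \<and> {x, y} \<noteq> {a, b})\<^sup>*\<^sup>* b a" (is "\<not> ?r\<^sup>*\<^sup>* b a")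
proof
  assume "?r\<^sup>*\<^sup>* b a"
  then obtain xs where path: "rtrancl_path ?r b xs a" and dist: "distinct (b # xs)"
    unfolding rtranclp_eq_rtrancl_path by (auto elim: rtrancl_path_distinct)
  define cs where "cs = b # xs"
  have last_cs: "last cs = a"
    unfolding cs_def using rtrancl_path_last[OF path] .
  have "card {a, b} = 2"
    using tree ab unfolding is_tree_def simple_graph_def by blast
  then have "xs \<noteq> []"
    using last_cs by (auto simp: cs_def)
  moreover have "xs \<noteq> [a]"
    using rtrancl_path_nth[OF path, of 0] by (auto simp: insert_commute)
  ultimately have "length xs \<ge> 2"
    using last_cs unfolding cs_def by (cases xs; cases "tl xs") auto
  then have "length cs \<ge> 3"
    by (simp add: cs_def)
  moreover have "{cs ! i, cs ! ((i + 1) mod length cs)} \<in> E" if "i < length cs" for i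
  proof (cases "i < length xs")
    case True
    then show ?thesis
      using rtrancl_path_nth[OF path True] by (simp add: cs_def)
  next
    case False
    then have "i = length xs"
      using that by (simp add: cs_def)
    moreover have "cs ! length xs = a"
      using last_cs last_conv_nth[of cs] by (simp add: cs_def)
    ultimately show ?thesis
      using ab by (simp add: cs_def insert_commute)
  qed
  moreover have "distinct cs"
    using dist by (simp add: cs_def)
  ultimately show False
    using tree unfolding is_tree_def acyclic_graph_def by blast
qed

lemma tree_edge_cut:
  assumes tree: "is_tree V E" and ab: "{a, b} \<in> E"
  obtains S where "b \<in> S" "a \<notin> S"
    "\<And>x y. {x, y} \<in> E \<Longrightarrow> x \<in> S \<Longrightarrow> y \<notin> S \<Longrightarrow> x = b \<and> y = a"
proof -
  define r where "r x y \<longleftrightarrow> {x, y} \<in> E \<and> {x, y} \<noteq> {a, b}" for x y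
  define S where "S = {x. r\<^sup>*\<^sup>* b x}"
  have "a \<notin> S"
    using tree_edge_not_bypassed[OF tree ab] by (simp add: S_def r_def[abs_def])
  moreover have "x = b \<and> y = a" if "{x, y} \<in> E" "x \<in> S" "y \<notin> S" for x y
  proof -
    have "\<not> r x y"
      using that(2,3) unfolding S_def by (metis mem_Collect_eq rtranclp.rtrancl_into_rtrancl)
    then have "{x, y} = {a, b}"
      using that(1) by (simp add: r_def)
    then show ?thesis
      using that(2,3) \<open>a \<notin> S\<close> by (auto simp: doubleton_eq_iff)
  qed
  moreover have "b \<in> S"
    by (simp add: S_def)
  ultimately show ?thesis
    using that by blast
qed

definition moves_along :: "'a set set \<Rightarrow> 'a set \<Rightarrow> ('a \<Rightarrow> 'a) \<Rightarrow> bool" where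
  "moves_along E H \<sigma> \<longleftrightarrow> (\<forall>v\<in>H. \<sigma> v = v \<or> {v, \<sigma> v} \<in> E)"

text \<open>Across the cut, \<open>\<sigma>\<close> can only leave \<open>S\<close> by \<open>b \<mapsto> a\<close> and enter it by \<open>a \<mapsto> b\<close>.\<close>
lemma card_cut_moves_along:
  assumes fin: "finite H" and bij: "bij_betw \<sigma> H T" and along: "moves_along E H \<sigma>"
    and "b \<in> S" "a \<notin> S" and cut: "\<And>x y. {x, y} \<in> E \<Longrightarrow> x \<in> S \<Longrightarrow> y \<notin> S \<Longrightarrow> x = b \<and> y = a"
  shows "card (H \<inter> S) + of_bool (a \<in> H \<and> \<sigma> a = b) = card (T \<inter> S) + of_bool (b \<in> H \<and> \<sigma> b = a)"
proof -
  have crossing: "{v, \<sigma> v} \<in> E" if "v \<in> H" "\<sigma> v \<in> S \<longleftrightarrow> v \<notin> S" for v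
  proof -
    have "\<sigma> v \<noteq> v"
      using that(2) by (cases "v \<in> S") auto
    then show ?thesis
      using along that(1) unfolding moves_along_def by blast
  qed
  have "v = b \<and> \<sigma> v = a" if "v \<in> H \<inter> S - \<sigma> -` S" for v
    using that by (intro cut crossing) auto
  then have leave: "H \<inter> S - \<sigma> -` S = (if b \<in> H \<and> \<sigma> b = a then {b} else {})"
    using \<open>b \<in> S\<close> \<open>a \<notin> S\<close> by auto
  have "v = a \<and> \<sigma> v = b" if "v \<in> H \<inter> \<sigma> -` S - S" for v
  proof -
    have "{\<sigma> v, v} \<in> E"
      using that crossing[of v] by (simp add: insert_commute)
    then show ?thesis
      using that cut[of "\<sigma> v" v] by blast
  qed
  then have enter: "H \<inter> \<sigma> -` S - S = (if a \<in> H \<and> \<sigma> a = b then {a} else {})"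
    using \<open>b \<in> S\<close> \<open>a \<notin> S\<close> by auto
  have "T \<inter> S = \<sigma> ` (H \<inter> \<sigma> -` S)"
    using bij by (auto simp: bij_betw_def)
  then have "card (T \<inter> S) = card (H \<inter> \<sigma> -` S)"
    using bij by (simp add: bij_betw_def card_image inj_on_Int)
  also have "\<dots> = card (H \<inter> \<sigma> -` S \<inter> S) + card (H \<inter> \<sigma> -` S - S)"
    using fin by (simp add: card_Int_Diff)
  finally have "card (T \<inter> S) = card (H \<inter> S \<inter> \<sigma> -` S) + card (H \<inter> \<sigma> -` S - S)"
    by (simp add: Int_ac)
  moreover have "card (H \<inter> S) = card (H \<inter> S \<inter> \<sigma> -` S) + card (H \<inter> S - \<sigma> -` S)"
    using fin by (simp add: card_Int_Diff)
  ultimately show ?thesis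
    unfolding leave enter by simp
qed

lemma moves_along_forced:
  assumes tree: "is_tree V E" and fin: "finite H" and ab: "{a, b} \<in> E"
    and bij0: "bij_betw \<sigma>0 H T" "moves_along E H \<sigma>0"
    and "b \<in> H" "\<sigma>0 b = a" "\<not> (a \<in> H \<and> \<sigma>0 a = b)"
    and bij: "bij_betw \<sigma> H T" "moves_along E H \<sigma>"
  shows "\<sigma> b = a"
proof -
  obtain S where "b \<in> S" "a \<notin> S"
    and cut: "\<And>x y. {x, y} \<in> E \<Longrightarrow> x \<in> S \<Longrightarrow> y \<notin> S \<Longrightarrow> x = b \<and> y = a"
    using tree_edge_cut[OF tree ab] by blast
  note card_cut = card_cut_moves_along[OF fin _ _ \<open>b \<in> S\<close> \<open>a \<notin> S\<close> cut]
  have "of_bool (a \<in> H \<and> \<sigma>0 a = b) = (0::nat)" "of_bool (b \<in> H \<and> \<sigma>0 b = a) = (1::nat)"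
    using assms(6-8) by simp_all
  then have "card (H \<inter> S) = card (T \<inter> S) + 1"
    using card_cut[OF bij0] by linarith
  then have "of_bool (b \<in> H \<and> \<sigma> b = a) = (1::nat) + of_bool (a \<in> H \<and> \<sigma> a = b)"
    using card_cut[OF bij] by linarith
  then show ?thesis
    by (cases "b \<in> H \<and> \<sigma> b = a") simp_all
qed

locale sorted_minor =
  fixes R C :: "'a::linorder set"
  assumes finite_R: "finite R" and finite_C: "finite C" and card_C: "card C = card R"
begin

definition rs :: "'a list" where "rs = sorted_list_of_set R"
definition cs :: "'a list" where "cs = sorted_list_of_set C"
definition row_index :: "'a \<Rightarrow> nat" where "row_index = the_inv_into {..<card R} ((!) rs)"
definition col_index :: "'a \<Rightarrow> nat" where "col_index = the_inv_into {..<card R} ((!) cs)"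

definition bij_of_perm :: "(nat \<Rightarrow> nat) \<Rightarrow> 'a \<Rightarrow> 'a" where
  "bij_of_perm p v = cs ! p (row_index v)"

definition perm_of_bij :: "('a \<Rightarrow> 'a) \<Rightarrow> nat \<Rightarrow> nat" where
  "perm_of_bij \<sigma> i = (if i < card R then col_index (\<sigma> (rs ! i)) else i)"

lemma bij_rs: "bij_betw ((!) rs) {..<card R} R"
  unfolding rs_def using finite_R by (intro bij_betw_nth) simp_all

lemma bij_cs: "bij_betw ((!) cs) {..<card R} C"
  unfolding cs_def card_C[symmetric] using finite_C by (intro bij_betw_nth) simp_all

lemma row_index_nth: "i < card R \<Longrightarrow> row_index (rs ! i) = i"
  unfolding row_index_def using bij_rs by (simp add: bij_betw_def the_inv_into_f_f)

lemma col_index_nth: "i < card R \<Longrightarrow> col_index (cs ! i) = i"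
  unfolding col_index_def using bij_cs by (simp add: bij_betw_def the_inv_into_f_f)

lemma nth_row_index: "v \<in> R \<Longrightarrow> rs ! row_index v = v"
  unfolding row_index_def using bij_rs by (rule f_the_inv_into_f_bij_betw)

lemma nth_col_index: "v \<in> C \<Longrightarrow> cs ! col_index v = v"
  unfolding col_index_def using bij_cs by (rule f_the_inv_into_f_bij_betw)

lemma bij_betw_bij_of_perm:
  assumes "p permutes {0..<card R}"
  shows "bij_betw (bij_of_perm p) R C"
proof -
  have "bij_betw (((!) cs) \<circ> p \<circ> row_index) R C"
    using bij_betw_the_inv_into[OF bij_rs] permutes_imp_bij[OF assms] bij_cs
    by (auto simp: row_index_def atLeast0LessThan intro: bij_betw_trans)
  moreover have "bij_of_perm p = ((!) cs) \<circ> p \<circ> row_index"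
    by (simp add: fun_eq_iff bij_of_perm_def)
  ultimately show ?thesis
    by simp
qed

lemma perm_of_bij_permutes:
  assumes "bij_betw \<sigma> R C"
  shows "perm_of_bij \<sigma> permutes {0..<card R}"
proof (rule bij_imp_permutes)
  have "bij_betw (col_index \<circ> \<sigma> \<circ> (!) rs) {..<card R} {..<card R}"
    using bij_rs assms bij_betw_the_inv_into[OF bij_cs]
    by (auto simp: col_index_def intro: bij_betw_trans)
  moreover have "bij_betw (perm_of_bij \<sigma>) {..<card R} {..<card R} \<longleftrightarrow>
      bij_betw (col_index \<circ> \<sigma> \<circ> (!) rs) {..<card R} {..<card R}"
    by (rule bij_betw_cong) (simp add: perm_of_bij_def)
  ultimately show "bij_betw (perm_of_bij \<sigma>) {0..<card R} {0..<card R}"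
    by (simp add: atLeast0LessThan)
qed (simp add: perm_of_bij_def)

lemma bij_of_perm_of_bij:
  assumes "bij_betw \<sigma> R C" and "v \<in> R"
  shows "bij_of_perm (perm_of_bij \<sigma>) v = \<sigma> v"
proof -
  have "row_index v < card R"
    using bij_betw_the_inv_into[OF bij_rs] assms(2) by (auto simp: row_index_def bij_betw_def)
  moreover have "\<sigma> v \<in> C"
    using assms by (auto simp: bij_betw_def)
  ultimately show ?thesis
    using assms(2) by (simp add: bij_of_perm_def perm_of_bij_def nth_row_index nth_col_index)
qed

lemma perm_of_bij_unique:
  assumes p: "p permutes {0..<card R}" and eq: "\<And>v. v \<in> R \<Longrightarrow> bij_of_perm p v = \<sigma> v"
  shows "p = perm_of_bij \<sigma>"
proof
  fix i
  show "p i = perm_of_bij \<sigma> i"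
  proof (cases "i < card R")
    case True
    have "rs ! i \<in> R"
      using bij_rs True by (auto simp: bij_betw_def)
    then have "cs ! p i = \<sigma> (rs ! i)"
      using eq[of "rs ! i"] True by (simp add: bij_of_perm_def row_index_nth)
    moreover have "p i < card R"
      using permutes_in_image[OF p, of i] True by simp
    ultimately show ?thesis
      using True by (metis col_index_nth perm_of_bij_def)
  next
    case False
    then show ?thesis
      using p by (simp add: perm_of_bij_def permutes_not_in)
  qed
qed

lemma det_eq_sum_bij_of_perm:
  "det (mat (card R) (card C) (\<lambda>(i, j). A (rs ! i) (cs ! j))) =
    (\<Sum>p | p permutes {0..<card R}. signof p * (\<Prod>v\<in>R. A v (bij_of_perm p v)))"
proof -
  have "(\<Prod>i = 0..<card R. A (rs ! i) (cs ! p i)) = (\<Prod>v\<in>R. A v (bij_of_perm p v))"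
    if p: "p permutes {0..<card R}" for p
  proof -
    have "(\<Prod>i = 0..<card R. A (rs ! i) (cs ! p i)) = (\<Prod>i<card R. A (rs ! i) (bij_of_perm p (rs ! i)))"
      by (auto simp: atLeast0LessThan bij_of_perm_def row_index_nth intro: prod.cong)
    also have "\<dots> = (\<Prod>v\<in>R. A v (bij_of_perm p v))"
      by (rule prod.reindex_bij_betw[OF bij_rs])
    finally show ?thesis .
  qed
  moreover have "p i < card R" if "p permutes {0..<card R}" "i < card R" for p i
    using permutes_in_image[OF that(1), of i] that(2) by simp
  ultimately show ?thesis
    unfolding card_C by (subst det_def'[of _ "card R"]) (auto intro: sum.cong)
qed

lemma sub_det_eq_sum_bij_of_perm:
  "sub_det E R C = (\<Sum>p | p permutes {0..<card R}. signof p * (\<Prod>v\<in>R. Lmat E v (bij_of_perm p v)))"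
  unfolding sub_det_def using det_eq_sum_bij_of_perm by (simp add: rs_def cs_def)

end

lemma prod_Lmat_eq_0:
  assumes "finite H" and "\<not> moves_along E H \<sigma>"
  shows "(\<Prod>v\<in>H. Lmat E v (\<sigma> v)) = 0"
proof -
  obtain v where "v \<in> H" "\<sigma> v \<noteq> v" "{v, \<sigma> v} \<notin> E"
    using assms(2) unfolding moves_along_def by blast
  then have "Lmat E v (\<sigma> v) = 0"
    by (simp add: Lmat_def)
  then show ?thesis
    using assms(1) \<open>v \<in> H\<close> by (meson prod_zero)
qed

lemma prod_Lmat_moves_along:
  assumes "finite H" and along: "moves_along E H \<sigma>"
  shows "(\<Prod>v\<in>H. Lmat E v (\<sigma> v)) = (-1) ^ card (H - {v\<in>H. \<sigma> v = v}) * var_prod {v\<in>H. \<sigma> v = v}"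
proof -
  have "(\<Prod>v\<in>H. Lmat E v (\<sigma> v)) = (\<Prod>v\<in>H. if \<sigma> v = v then var v else -1)"
    using along by (intro prod.cong) (auto simp: Lmat_def moves_along_def)
  also have "\<dots> = (\<Prod>v\<in>H \<inter> {v. \<sigma> v = v}. var v) * (\<Prod>v\<in>H \<inter> - {v. \<sigma> v = v}. -1)"
    by (rule prod.If_cases[OF assms(1)])
  also have "H \<inter> {v. \<sigma> v = v} = {v\<in>H. \<sigma> v = v}"
    by auto
  also have "H \<inter> - {v. \<sigma> v = v} = H - {v\<in>H. \<sigma> v = v}"
    by auto
  finally show ?thesis
    by (simp add: var_prod_def mult.commute)
qed

lemma signed_prod_Lmat_moves_along:
  fixes p :: "nat \<Rightarrow> nat"
  assumes "finite H" and "moves_along E H \<sigma>"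
  defines "q \<equiv> signof p * (\<Prod>v\<in>H. Lmat E v (\<sigma> v))"
  shows "q = var_prod {v\<in>H. \<sigma> v = v} \<or> q = - var_prod {v\<in>H. \<sigma> v = v}"
  unfolding q_def prod_Lmat_moves_along[OF assms(1,2)]
  by (cases p rule: sign_cases; cases "even (card (H - {v\<in>H. \<sigma> v = v}))") simp_all

locale oriented_two_matching =
  fixes V :: "'a::linorder set" and E M :: "'a set set" and D :: "('a \<times> 'a) set"
  assumes tree: "is_tree V E"
    and two_matching: "two_matching V E M"
    and orientation: "path_orientation E M D"
begin

abbreviation L :: "'a set" where "L \<equiv> loops_of V M"
abbreviation H :: "'a set" where "H \<equiv> heads V M D"
abbreviation T :: "'a set" where "T \<equiv> tails V M D"

definition predecessor :: "'a \<Rightarrow> 'a" where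
  "predecessor v = (if v \<in> L then v else THE u. (u, v) \<in> D)"

lemma finite_V: "finite V"
  using tree unfolding is_tree_def simple_graph_def by simp

lemma arc_edge:
  assumes "(a, b) \<in> D"
  shows "{a, b} \<in> M" "{a, b} \<in> E" "a \<noteq> b" "a \<in> V" "b \<in> V"
proof -
  show "{a, b} \<in> M" "{a, b} \<in> E"
    using orientation assms unfolding path_orientation_def by blast+
  then have "card {a, b} = 2" "{a, b} \<subseteq> V"
    using tree unfolding is_tree_def simple_graph_def by auto
  then show "a \<noteq> b" "a \<in> V" "b \<in> V"
    by (cases "a = b"; simp)+
qed

lemma arc_out_unique: "(a, b) \<in> D \<Longrightarrow> (a, c) \<in> D \<Longrightarrow> b = c"
  using orientation unfolding path_orientation_def by blast

lemma arc_in_unique: "(b, a) \<in> D \<Longrightarrow> (c, a) \<in> D \<Longrightarrow> b = c"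
  using orientation unfolding path_orientation_def by blast

lemma arc_not_reversed: "(a, b) \<in> D \<Longrightarrow> (b, a) \<notin> D"
  using orientation arc_edge(1,2) unfolding path_orientation_def by blast

text \<open>A loop uses up both incidences of its vertex.\<close>
lemma loop_not_on_arc:
  assumes "u \<in> L" and "(a, b) \<in> D"
  shows "u \<noteq> a" "u \<noteq> b"
proof -
  have u: "u \<in> V" "{u} \<in> M"
    using assms(1) unfolding loops_of_def by auto
  have "finite E"
    using tree finite_V unfolding is_tree_def simple_graph_def
    by (meson Pow_iff finite_Pow_iff finite_subset subsetI)
  moreover have "card {e \<in> M \<inter> E. u \<in> e} = 0"
    using two_matching u unfolding two_matching_def by fastforce
  ultimately have "{e \<in> M \<inter> E. u \<in> e} = {}"
    by simp
  then show "u \<noteq> a" "u \<noteq> b"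
    using arc_edge(1,2)[OF assms(2)] by auto
qed

lemma finite_D: "finite D"
proof -
  have "D \<subseteq> V \<times> V"
    using arc_edge(4,5) by auto
  then show ?thesis
    using finite_V by (meson finite_SigmaI finite_subset)
qed

lemma finite_L: "finite L"
  using finite_V by (simp add: loops_of_def)

lemma finite_H: "finite H"
  using finite_D finite_L by (simp add: heads_def)

lemma finite_T: "finite T"
  using finite_D finite_L by (simp add: tails_def)

lemma loops_subset_heads: "L \<subseteq> H"
  by (simp add: heads_def)

lemma head_cases:
  assumes "v \<in> H"
  obtains "v \<in> L" | u where "(u, v) \<in> D" "v \<notin> L"
  using assms loop_not_on_arc unfolding heads_def by force

lemma tail_cases:
  assumes "v \<in> T"
  obtains "v \<in> L" | w where "(v, w) \<in> D" "v \<notin> L"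
  using assms loop_not_on_arc unfolding tails_def by force

lemma predecessor_loop: "v \<in> L \<Longrightarrow> predecessor v = v"
  by (simp add: predecessor_def)

lemma predecessor_arc: "(u, v) \<in> D \<Longrightarrow> predecessor v = u"
  using loop_not_on_arc arc_in_unique unfolding predecessor_def by (metis the_equality)

lemma predecessor_in_loops_iff: "v \<in> H \<Longrightarrow> predecessor v \<in> L \<longleftrightarrow> v \<in> L"
  by (cases rule: head_cases) (auto simp: predecessor_loop predecessor_arc dest: loop_not_on_arc)

lemma bij_predecessor: "bij_betw predecessor H T"
proof (rule bij_betw_imageI)
  show "inj_on predecessor H"
  proof (rule inj_onI)
    fix v w
    assume v: "v \<in> H" and w: "w \<in> H" and eq: "predecessor v = predecessor w"
    show "v = w"
    proof (cases "v \<in> L")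
      case True
      then have "w \<in> L"
        using eq predecessor_in_loops_iff[OF v] predecessor_in_loops_iff[OF w] by simp
      then show ?thesis
        using True eq by (simp add: predecessor_loop)
    next
      case False
      then have "w \<notin> L"
        using eq predecessor_in_loops_iff[OF v] predecessor_in_loops_iff[OF w] by simp
      obtain u u' where "(u, v) \<in> D" "(u', w) \<in> D"
        using v w \<open>v \<notin> L\<close> \<open>w \<notin> L\<close> by (metis head_cases)
      then show ?thesis
        using eq arc_out_unique by (simp add: predecessor_arc)
    qed
  qed
  have "predecessor v \<in> T" if "v \<in> H" for v
    using that
  proof (cases rule: head_cases)
    case (2 u)
    then show ?thesis
      by (simp add: predecessor_arc tails_def rev_image_eqI[of "(u, v)"])
  qed (simp add: predecessor_loop tails_def)
  moreover have "u \<in> predecessor ` H" if "u \<in> T" for u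
    using that
  proof (cases rule: tail_cases)
    case (2 w)
    then have "w \<in> H" "predecessor w = u"
      by (simp_all add: predecessor_arc heads_def rev_image_eqI[of "(u, w)"])
    then show ?thesis
      by (metis image_eqI)
  qed (metis predecessor_loop loops_subset_heads image_eqI subsetD)
  ultimately show "predecessor ` H = T"
    by blast
qed

lemma moves_along_predecessor: "moves_along E H predecessor"
  unfolding moves_along_def
proof
  fix v
  assume "v \<in> H"
  then show "predecessor v = v \<or> {v, predecessor v} \<in> E"
  proof (cases rule: head_cases)
    case (2 u)
    then show ?thesis
      using arc_edge(2) by (simp add: predecessor_arc insert_commute)
  qed (simp add: predecessor_loop)
qed

lemma predecessor_not_reversed:
  assumes "(a, b) \<in> D"
  shows "\<not> (a \<in> H \<and> predecessor a = b)"
proof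
  assume "a \<in> H \<and> predecessor a = b"
  then have "a \<in> H" "predecessor a = b"
    by simp_all
  from \<open>a \<in> H\<close> show False
  proof (cases rule: head_cases)
    case 1
    then show False
      using loop_not_on_arc assms by blast
  next
    case (2 u)
    then show False
      using \<open>predecessor a = b\<close> assms arc_not_reversed by (simp add: predecessor_arc)
  qed
qed

lemma arc_forced:
  assumes "bij_betw \<sigma> H T" "moves_along E H \<sigma>" and "(a, b) \<in> D"
  shows "\<sigma> b = a"
proof (rule moves_along_forced[OF tree finite_H _ bij_predecessor moves_along_predecessor _ _ _ assms(1,2)])
  show "{a, b} \<in> E"
    using assms(3) by (rule arc_edge(2))
  show "b \<in> H"
    using assms(3) by (force simp: heads_def)
  show "predecessor b = a"
    using assms(3) by (rule predecessor_arc)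
  show "\<not> (a \<in> H \<and> predecessor a = b)"
    using assms(3) by (rule predecessor_not_reversed)
qed

lemma fixed_points_subset_loops:
  assumes "bij_betw \<sigma> H T" "moves_along E H \<sigma>"
  shows "{v\<in>H. \<sigma> v = v} \<subseteq> L"
  using arc_forced[OF assms] arc_edge(3) by (auto elim: head_cases)

lemma eq_predecessor_if_fixes_loops:
  assumes "bij_betw \<sigma> H T" "moves_along E H \<sigma>" and "\<And>v. v \<in> L \<Longrightarrow> \<sigma> v = v" and "v \<in> H"
  shows "\<sigma> v = predecessor v"
  using assms(3,4) arc_forced[OF assms(1,2)] by (auto elim: head_cases simp: predecessor_loop predecessor_arc)

sublocale minor: sorted_minor H T
  using finite_H finite_T bij_betw_same_card[OF bij_predecessor] by unfold_locales simp_all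

lemma fixed_points_predecessor: "{v\<in>H. predecessor v = v} = L"
  using fixed_points_subset_loops[OF bij_predecessor moves_along_predecessor] loops_subset_heads
  by (auto simp: predecessor_loop)

lemma leading_term_predecessor:
  defines "p0 \<equiv> minor.perm_of_bij predecessor"
  shows "signof p0 * (\<Prod>v\<in>H. Lmat E v (minor.bij_of_perm p0 v)) = var_prod L \<or>
    signof p0 * (\<Prod>v\<in>H. Lmat E v (minor.bij_of_perm p0 v)) = - var_prod L"
proof -
  have "(\<Prod>v\<in>H. Lmat E v (minor.bij_of_perm p0 v)) = (\<Prod>v\<in>H. Lmat E v (predecessor v))"
    unfolding p0_def by (rule prod.cong) (simp_all add: minor.bij_of_perm_of_bij[OF bij_predecessor])
  then show ?thesis
    using signed_prod_Lmat_moves_along[OF finite_H moves_along_predecessor, of p0]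
    by (simp add: fixed_points_predecessor)
qed

lemma lower_deg_other_terms:
  assumes p: "p permutes {0..<card H}" and "p \<noteq> minor.perm_of_bij predecessor"
  shows "lower_deg (signof p * (\<Prod>v\<in>H. Lmat E v (minor.bij_of_perm p v))) (card L)"
proof (cases "moves_along E H (minor.bij_of_perm p)")
  case False
  then show ?thesis
    by (simp add: prod_Lmat_eq_0[OF finite_H])
next
  case along: True
  define F where "F = {v\<in>H. minor.bij_of_perm p v = v}"
  have bij: "bij_betw (minor.bij_of_perm p) H T"
    using p by (rule minor.bij_betw_bij_of_perm)
  have "F \<subseteq> L"
    unfolding F_def using bij along by (rule fixed_points_subset_loops)
  moreover have "F \<noteq> L"
  proof
    assume "F = L"
    then have "minor.bij_of_perm p v = predecessor v" if "v \<in> H" for v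
      using eq_predecessor_if_fixes_loops[OF bij along _ that] by (auto simp: F_def)
    then have "p = minor.perm_of_bij predecessor"
      by (rule minor.perm_of_bij_unique[OF p])
    with assms(2) show False ..
  qed
  ultimately have "card F < card L" "finite F"
    using finite_L by (auto simp: psubset_card_mono finite_subset)
  then have "lower_deg (var_prod F) (card L)"
    by (simp add: lower_deg_var_prod)
  then show ?thesis
    using signed_prod_Lmat_moves_along[OF finite_H along, of p] unfolding F_def by auto
qed

theorem sub_det_leading_term:
  "\<exists>p. lower_deg p (card L) \<and> (sub_det E H T = var_prod L + p \<or> sub_det E H T = - (var_prod L + p))"
  unfolding minor.sub_det_eq_sum_bij_of_perm
proof (rule sum_leading_term)
  show "finite {p. p permutes {0..<card H}}"
    by (simp add: finite_permutations)
  show "minor.perm_of_bij predecessor \<in> {p. p permutes {0..<card H}}"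
    using minor.perm_of_bij_permutes[OF bij_predecessor] by simp
qed (use leading_term_predecessor lower_deg_other_terms in auto)

end

theorem lemma3p2:
  fixes V :: "'a::linorder set" and E :: "'a set set" and M :: "'a set set"
    and D :: "('a \<times> 'a) set"
  assumes "is_tree V E"
    and "two_matching V E M"
    and "path_orientation E M D"
  shows "\<exists>p. lower_deg p (card (loops_of V M)) \<and>
    (sub_det E (heads V M D) (tails V M D) = var_prod (loops_of V M) + p \<or>
     sub_det E (heads V M D) (tails V M D) = - (var_prod (loops_of V M) + p))"
proof -
  interpret oriented_two_matching V E M D
    using assms by unfold_locales
  show ?thesis
    by (rule sub_det_leading_term)
qed

end
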